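(* For every finite simple graph $G$, the acyclic chromatic number satisfies $a(G)\le \tau(G)$.
   Context: $\tau(G)$ denotes the number of vertices in a longest path of $G$. An acyclic colouring of $G$ is a proper vertex colouring of $G$ in which no cycle of $G$ is coloured with only two colours; $a(G)$ is the minimum number of colours in an acyclic colouring of $G$. *)

theory Defs
  imports Main
begin

definition finite_simple_graph :: "'a set \<Rightarrow> ('a \<Rightarrow> 'a \<Rightarrow> bool) \<Rightarrow> bool" where
  "finite_simple_graph V E \<longleftrightarrow> finite V \<and> (\<forall>u v. E u v \<longrightarrow> u \<in> V \<and> v \<in> V)
     \<and> (\<forall>u v. E u v \<longrightarrow> E v u) \<and> (\<forall>v. \<not> E v v)"

definition is_path :: "'a set \<Rightarrow> ('a \<Rightarrow> 'a \<Rightarrow> bool) \<Rightarrow> 'a list \<Rightarrow> bool" where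
  "is_path V E p \<longleftrightarrow> p \<noteq> [] \<and> set p \<subseteq> V \<and> distinct p
     \<and> (\<forall>i. Suc i < length p \<longrightarrow> E (p ! i) (p ! Suc i))"

definition is_cycle :: "'a set \<Rightarrow> ('a \<Rightarrow> 'a \<Rightarrow> bool) \<Rightarrow> 'a list \<Rightarrow> bool" where
  "is_cycle V E c \<longleftrightarrow> length c \<ge> 3 \<and> set c \<subseteq> V \<and> distinct c
     \<and> (\<forall>i. Suc i < length c \<longrightarrow> E (c ! i) (c ! Suc i))
     \<and> E (last c) (hd c)"

text \<open>tau(G): number of vertices in a longest path (0 for the empty graph).\<close>
definition tau :: "'a set \<Rightarrow> ('a \<Rightarrow> 'a \<Rightarrow> bool) \<Rightarrow> nat" where
  "tau V E = Max (insert 0 {length p | p. is_path V E p})"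

definition proper_colouring :: "'a set \<Rightarrow> ('a \<Rightarrow> 'a \<Rightarrow> bool) \<Rightarrow> ('a \<Rightarrow> nat) \<Rightarrow> bool" where
  "proper_colouring V E col \<longleftrightarrow> (\<forall>u v. E u v \<longrightarrow> col u \<noteq> col v)"

definition acyclic_colouring :: "'a set \<Rightarrow> ('a \<Rightarrow> 'a \<Rightarrow> bool) \<Rightarrow> nat \<Rightarrow> ('a \<Rightarrow> nat) \<Rightarrow> bool" where
  "acyclic_colouring V E k col \<longleftrightarrow> col ` V \<subseteq> {0..<k} \<and> proper_colouring V E col
     \<and> (\<forall>c. is_cycle V E c \<longrightarrow> card (col ` set c) > 2)"

definition acyclic_chromatic_number :: "'a set \<Rightarrow> ('a \<Rightarrow> 'a \<Rightarrow> bool) \<Rightarrow> nat" where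
  "acyclic_chromatic_number V E = (LEAST k. \<exists>col. acyclic_colouring V E k col)"

end

theory Submission
  imports Defs
begin

text \<open>Colour every vertex by its depth in a depth-first search tree. Depths are lengths of
  tree paths, so fewer than \<open>\<tau>(G)\<close> colours are used. Every edge joins a vertex to one of its
  ancestors, so the neighbours of \<open>u\<close> of smaller colour are ancestors of \<open>u\<close> and carry pairwise
  distinct colours. On a cycle, the vertex of largest colour therefore sees two further
  colours on its two cycle neighbours.

  The search tree is not built explicitly: the colouring is constructed by induction on the
  number of vertices, splitting off a root \<open>r\<close>, the components of \<open>G - r\<close> adjacent to \<open>r\<close>
  (coloured one level deeper, rooted at neighbours of \<open>r\<close>) and the remaining vertices.\<close>

definition adj_in :: "('a \<Rightarrow> 'a \<Rightarrow> bool) \<Rightarrow> 'a set \<Rightarrow> 'a \<Rightarrow> 'a \<Rightarrow> bool" where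
  "adj_in E W a b \<longleftrightarrow> E a b \<and> a \<in> W \<and> b \<in> W"

definition reachable_from :: "('a \<Rightarrow> 'a \<Rightarrow> bool) \<Rightarrow> 'a set \<Rightarrow> 'a set \<Rightarrow> bool" where
  "reachable_from E W S \<longleftrightarrow> (\<forall>w\<in>W. \<exists>s\<in>S. (adj_in E W)\<^sup>*\<^sup>* s w)"

lemma adj_in_rtranclp_source:
  assumes "(adj_in E W)\<^sup>*\<^sup>* s w" "w \<in> W"
  shows "s \<in> W"
  using assms by (induction rule: converse_rtranclp_induct) (auto simp: adj_in_def)

lemma adj_in_rtranclp_closed:
  assumes "(adj_in E X)\<^sup>*\<^sup>* a b" "a \<in> Y" "Y \<subseteq> X"
    and closed: "\<And>u v. u \<in> Y \<Longrightarrow> v \<in> X \<Longrightarrow> E u v \<Longrightarrow> v \<in> Y"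
  shows "(adj_in E Y)\<^sup>*\<^sup>* a b \<and> b \<in> Y"
  using assms(1)
proof induction
  case base
  then show ?case using assms(2) by simp
next
  case (step y z)
  then have yz: "adj_in E Y y z" using closed unfolding adj_in_def by blast
  then have "z \<in> Y" unfolding adj_in_def by simp
  with step.IH yz show ?case by (blast intro: rtranclp.rtrancl_into_rtrancl)
qed

lemma adj_in_rtranclp_Diff:
  assumes "(adj_in E W)\<^sup>*\<^sup>* s w"
  shows "w = r \<or> (s \<noteq> r \<and> (adj_in E (W - {r}))\<^sup>*\<^sup>* s w)
    \<or> (\<exists>n. E r n \<and> (adj_in E (W - {r}))\<^sup>*\<^sup>* n w)"
  using assms
proof induction
  case base
  then show ?case by auto
next
  case (step y z)
  show ?case
  proof (cases "z = r \<or> y = r")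
    case True
    then show ?thesis using step(2) unfolding adj_in_def by auto
  next
    case False
    then have "adj_in E (W - {r}) y z" using step(2) unfolding adj_in_def by auto
    with step(3) False show ?thesis by (meson rtranclp.rtrancl_into_rtrancl)
  qed
qed

lemma is_path_Cons:
  assumes "is_path V E p" "r \<in> V" "r \<notin> set p" "E r (hd p)"
  shows "is_path V E (r # p)"
  using assms unfolding is_path_def
  by (auto simp: hd_conv_nth nth_Cons split: nat.split)

definition proper_on :: "('a \<Rightarrow> 'a \<Rightarrow> bool) \<Rightarrow> 'a set \<Rightarrow> ('a \<Rightarrow> nat) \<Rightarrow> bool" where
  "proper_on E W col \<longleftrightarrow> (\<forall>u\<in>W. \<forall>v\<in>W. E u v \<longrightarrow> col u \<noteq> col v)"

definition lower_neighbours_distinct :: "('a \<Rightarrow> 'a \<Rightarrow> bool) \<Rightarrow> 'a set \<Rightarrow> ('a \<Rightarrow> nat) \<Rightarrow> bool" where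
  "lower_neighbours_distinct E W col \<longleftrightarrow>
    (\<forall>u\<in>W. \<forall>a\<in>W. \<forall>b\<in>W. E u a \<longrightarrow> E u b \<longrightarrow> col a = col b \<longrightarrow> col a < col u \<longrightarrow> a = b)"

text \<open>Paths start in \<open>S\<close> so that, when \<open>S\<close> is the neighbourhood of a new root, the root can
  be prepended to them.\<close>
definition depth_colouring ::
    "'a set \<Rightarrow> ('a \<Rightarrow> 'a \<Rightarrow> bool) \<Rightarrow> 'a set \<Rightarrow> 'a set \<Rightarrow> ('a \<Rightarrow> nat) \<Rightarrow> bool" where
  "depth_colouring V E W S col \<longleftrightarrow> proper_on E W col \<and> lower_neighbours_distinct E W col
    \<and> (\<forall>v\<in>W. \<exists>p. is_path V E p \<and> set p \<subseteq> W \<and> hd p \<in> S \<and> col v < length p)"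

lemma depth_colouring_empty: "depth_colouring V E {} S col"
  unfolding depth_colouring_def proper_on_def lower_neighbours_distinct_def by simp

lemma depth_colouring_insert_root:
  assumes col: "depth_colouring V E A {n. E r n} col"
    and "r \<in> V" "r \<notin> A" "r \<in> S" "\<not> E r r"
  shows "depth_colouring V E (insert r A) S (\<lambda>v. if v = r then 0 else Suc (col v))"
    (is "depth_colouring V E _ S ?col")
proof -
  have proper: "proper_on E A col" and lower_distinct: "lower_neighbours_distinct E A col"
    and paths: "\<And>v. v \<in> A \<Longrightarrow> \<exists>p. is_path V E p \<and> set p \<subseteq> A \<and> E r (hd p) \<and> col v < length p"
    using col unfolding depth_colouring_def by auto
  have "proper_on E (insert r A) ?col"
    using proper \<open>\<not> E r r\<close> \<open>r \<notin> A\<close> unfolding proper_on_def by auto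
  moreover have "lower_neighbours_distinct E (insert r A) ?col"
    unfolding lower_neighbours_distinct_def
  proof (intro ballI impI)
    fix u a b assume "u \<in> insert r A" "a \<in> insert r A" "b \<in> insert r A"
      and edges: "E u a" "E u b" and eq: "?col a = ?col b" and lower: "?col a < ?col u"
    then have "u \<in> A" "u \<noteq> r" by auto
    show "a = b"
    proof (cases "a = r")
      case True
      with eq show ?thesis by (simp split: if_splits)
    next
      case False
      with eq have "b \<noteq> r" by (simp split: if_splits)
      with False \<open>a \<in> insert r A\<close> \<open>b \<in> insert r A\<close> have "a \<in> A" "b \<in> A" by auto
      from False \<open>b \<noteq> r\<close> \<open>u \<noteq> r\<close> eq lower have "col a = col b" "col a < col u" by simp_all
      with \<open>u \<in> A\<close> \<open>a \<in> A\<close> \<open>b \<in> A\<close> edges lower_distinct show ?thesis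
        unfolding lower_neighbours_distinct_def by blast
    qed
  qed
  moreover have "\<exists>p. is_path V E p \<and> set p \<subseteq> insert r A \<and> hd p \<in> S \<and> ?col v < length p"
    if "v \<in> insert r A" for v
  proof (cases "v = r")
    case True
    have "is_path V E [r]" using \<open>r \<in> V\<close> unfolding is_path_def by simp
    with True \<open>r \<in> S\<close> show ?thesis by (intro exI[of _ "[r]"]) simp
  next
    case False
    with that have "v \<in> A" by simp
    with paths obtain p where p: "is_path V E p" "set p \<subseteq> A" "E r (hd p)" "col v < length p"
      by blast
    have "r \<notin> set p" using p(2) \<open>r \<notin> A\<close> by blast
    then have "is_path V E (r # p)" using is_path_Cons[OF p(1) \<open>r \<in> V\<close> _ p(3)] by simp
    with p False \<open>r \<in> S\<close> show ?thesis by (intro exI[of _ "r # p"]) auto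
  qed
  ultimately show ?thesis unfolding depth_colouring_def by blast
qed

lemma depth_colouring_Un:
  assumes colA: "depth_colouring V E A S colA" and colB: "depth_colouring V E B S colB"
    and separated: "\<And>a b. a \<in> A \<Longrightarrow> b \<in> B \<Longrightarrow> \<not> E a b \<and> \<not> E b a"
  shows "depth_colouring V E (A \<union> B) S (\<lambda>v. if v \<in> A then colA v else colB v)"
    (is "depth_colouring V E _ S ?col")
proof -
  have same_side: "u \<in> A \<longleftrightarrow> v \<in> A" if "u \<in> A \<union> B" "v \<in> A \<union> B" "E u v" for u v
    using separated that by blast
  have "proper_on E (A \<union> B) ?col"
    unfolding proper_on_def
  proof (intro ballI impI)
    fix u v assume "u \<in> A \<union> B" "v \<in> A \<union> B" "E u v"
    then show "?col u \<noteq> ?col v"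
      using same_side[of u v] colA colB unfolding depth_colouring_def proper_on_def
      by (cases "u \<in> A") auto
  qed
  moreover have "lower_neighbours_distinct E (A \<union> B) ?col"
    unfolding lower_neighbours_distinct_def
  proof (intro ballI impI)
    fix u a b assume "u \<in> A \<union> B" "a \<in> A \<union> B" "b \<in> A \<union> B" "E u a" "E u b"
      "?col a = ?col b" "?col a < ?col u"
    then show "a = b"
      using same_side[of u a] same_side[of u b] colA colB
      unfolding depth_colouring_def lower_neighbours_distinct_def
      by (cases "u \<in> A") auto
  qed
  moreover have "\<exists>p. is_path V E p \<and> set p \<subseteq> A \<union> B \<and> hd p \<in> S \<and> ?col v < length p"
    if "v \<in> A \<union> B" for v
  proof (cases "v \<in> A")
    case True
    with colA obtain p where "is_path V E p" "set p \<subseteq> A" "hd p \<in> S" "colA v < length p"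
      unfolding depth_colouring_def by blast
    with True show ?thesis by (intro exI[of _ p]) auto
  next
    case False
    with that colB obtain p where "is_path V E p" "set p \<subseteq> B" "hd p \<in> S" "colB v < length p"
      unfolding depth_colouring_def by blast
    with False show ?thesis by (intro exI[of _ p]) auto
  qed
  ultimately show ?thesis unfolding depth_colouring_def by blast
qed

definition branches :: "('a \<Rightarrow> 'a \<Rightarrow> bool) \<Rightarrow> 'a set \<Rightarrow> 'a \<Rightarrow> 'a set" where
  "branches E W r = {w \<in> W - {r}. \<exists>n. E r n \<and> (adj_in E (W - {r}))\<^sup>*\<^sup>* n w}"

lemma branches_subset: "branches E W r \<subseteq> W - {r}"
  unfolding branches_def by blast

lemma neighbour_in_branches: "v \<in> W - {r} \<Longrightarrow> E r v \<Longrightarrow> v \<in> branches E W r"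
  unfolding branches_def by blast

lemma branches_closed:
  assumes "u \<in> branches E W r" "v \<in> W - {r}" "E u v"
  shows "v \<in> branches E W r"
proof -
  from assms(1) obtain n where n: "E r n" "(adj_in E (W - {r}))\<^sup>*\<^sup>* n u" and "u \<in> W - {r}"
    unfolding branches_def by blast
  with assms(2,3) have "adj_in E (W - {r}) u v" unfolding adj_in_def by blast
  with n have "(adj_in E (W - {r}))\<^sup>*\<^sup>* n v" by (blast intro: rtranclp.rtrancl_into_rtrancl)
  with n(1) assms(2) show ?thesis unfolding branches_def by blast
qed

lemma reachable_from_branches: "reachable_from E (branches E W r) {n. E r n}"
  unfolding reachable_from_def
proof
  fix w assume "w \<in> branches E W r"
  then obtain n where n: "E r n" "(adj_in E (W - {r}))\<^sup>*\<^sup>* n w" and "w \<in> W - {r}"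
    unfolding branches_def by blast
  then have "n \<in> W - {r}" using adj_in_rtranclp_source by fast
  then have n_branch: "n \<in> branches E W r" using neighbour_in_branches n(1) by fast
  have "(adj_in E (branches E W r))\<^sup>*\<^sup>* n w \<and> w \<in> branches E W r"
    by (rule adj_in_rtranclp_closed[OF n(2) n_branch branches_subset]) (rule branches_closed)
  with n(1) show "\<exists>s\<in>{n. E r n}. (adj_in E (branches E W r))\<^sup>*\<^sup>* s w" by blast
qed

lemma branches_separated:
  assumes sym: "\<And>u v. E u v \<Longrightarrow> E v u"
    and a: "a \<in> insert r (branches E W r)" and b: "b \<in> W - insert r (branches E W r)"
  shows "\<not> E a b \<and> \<not> E b a"
proof -
  have "\<not> E a b"
  proof
    assume "E a b"
    from b have b': "b \<in> W - {r}" by blast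
    have "b \<in> branches E W r"
    proof (cases "a = r")
      case True
      with \<open>E a b\<close> b' show ?thesis by (simp add: neighbour_in_branches)
    next
      case False
      with a have "a \<in> branches E W r" by simp
      from branches_closed[OF this b' \<open>E a b\<close>] show ?thesis .
    qed
    with b show False by blast
  qed
  with sym show ?thesis by blast
qed

lemma reachable_from_Diff_branches:
  assumes sym: "\<And>u v. E u v \<Longrightarrow> E v u" and reach: "reachable_from E W S"
  shows "reachable_from E (W - insert r (branches E W r)) S"
  unfolding reachable_from_def
proof
  let ?B = "W - insert r (branches E W r)"
  fix w assume w: "w \<in> ?B"
  with reach obtain s where "s \<in> S" and walk: "(adj_in E W)\<^sup>*\<^sup>* s w"
    unfolding reachable_from_def by blast
  have not_via_r: "\<not> (\<exists>n. E r n \<and> (adj_in E (W - {r}))\<^sup>*\<^sup>* n w)"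
    using w unfolding branches_def by blast
  from adj_in_rtranclp_Diff[OF walk, of r] w not_via_r
  have walk': "(adj_in E (W - {r}))\<^sup>*\<^sup>* s w" by blast
  have closed: "v \<in> ?B" if u: "u \<in> ?B" and v: "v \<in> W - {r}" and "E u v" for u v
  proof -
    have "v \<notin> branches E W r"
    proof
      assume "v \<in> branches E W r"
      moreover from u have "u \<in> W - {r}" by blast
      ultimately have "u \<in> branches E W r" using sym[OF \<open>E u v\<close>] by (rule branches_closed)
      with u show False by blast
    qed
    with v show ?thesis by blast
  qed
  from adj_in_rtranclp_source[OF walk'] w have "s \<in> W - {r}" by blast
  moreover have "s \<notin> branches E W r"
  proof
    assume s_branch: "s \<in> branches E W r"
    have "(adj_in E (branches E W r))\<^sup>*\<^sup>* s w \<and> w \<in> branches E W r"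
      by (rule adj_in_rtranclp_closed[OF walk' s_branch branches_subset]) (rule branches_closed)
    with w show False by blast
  qed
  ultimately have "s \<in> ?B" by blast
  moreover have "?B \<subseteq> W - {r}" by blast
  ultimately have "(adj_in E ?B)\<^sup>*\<^sup>* s w \<and> w \<in> ?B"
    by (rule adj_in_rtranclp_closed[OF walk']) (rule closed)
  with \<open>s \<in> S\<close> show "\<exists>s\<in>S. (adj_in E ?B)\<^sup>*\<^sup>* s w" by blast
qed

lemma depth_colouring_exists:
  assumes G: "finite_simple_graph V E"
  shows "finite W \<Longrightarrow> W \<subseteq> V \<Longrightarrow> reachable_from E W S \<Longrightarrow> \<exists>col. depth_colouring V E W S col"
proof (induction "card W" arbitrary: W S rule: less_induct)
  case less
  have sym: "\<And>u v. E u v \<Longrightarrow> E v u" and irrefl: "\<And>v. \<not> E v v"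
    using G unfolding finite_simple_graph_def by blast+
  show ?case
  proof (cases "W = {}")
    case True
    then show ?thesis using depth_colouring_empty by blast
  next
    case False
    then obtain w where "w \<in> W" by blast
    with less.prems(3) obtain r where "r \<in> S" and walk: "(adj_in E W)\<^sup>*\<^sup>* r w"
      unfolding reachable_from_def by blast
    from adj_in_rtranclp_source[OF walk \<open>w \<in> W\<close>] have "r \<in> W" .
    define A where "A = branches E W r"
    define B where "B = W - insert r A"
    have "A \<subseteq> W - {r}" unfolding A_def by (rule branches_subset)
    with \<open>r \<in> W\<close> have "A \<subset> W" "B \<subset> W" unfolding B_def by blast+
    with less.prems(1,2) have "card A < card W" "card B < card W" "finite A" "finite B"
      "A \<subseteq> V" "B \<subseteq> V"
      by (auto intro: psubset_card_mono finite_subset)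
    obtain colA where "depth_colouring V E A {n. E r n} colA"
      using less.hyps[OF \<open>card A < card W\<close> \<open>finite A\<close> \<open>A \<subseteq> V\<close>]
        reachable_from_branches[of E W r] unfolding A_def by blast
    then have root: "depth_colouring V E (insert r A) S (\<lambda>v. if v = r then 0 else Suc (colA v))"
      using \<open>r \<in> W\<close> less.prems(2) \<open>r \<in> S\<close> irrefl \<open>A \<subseteq> W - {r}\<close>
      by (intro depth_colouring_insert_root) auto
    obtain colB where rest: "depth_colouring V E B S colB"
      using less.hyps[OF \<open>card B < card W\<close> \<open>finite B\<close> \<open>B \<subseteq> V\<close>]
        reachable_from_Diff_branches[of E, OF sym less.prems(3)] unfolding B_def A_def by blast
    have "depth_colouring V E (insert r A \<union> B) S
        (\<lambda>v. if v \<in> insert r A then if v = r then 0 else Suc (colA v) else colB v)"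
      using depth_colouring_Un[OF root rest] branches_separated[of E, OF sym]
      unfolding B_def A_def by blast
    moreover have "insert r A \<union> B = W" using \<open>r \<in> W\<close> \<open>A \<subset> W\<close> unfolding B_def by blast
    ultimately show ?thesis by auto
  qed
qed

lemma length_le_tau:
  assumes "finite V" and p: "is_path V E p"
  shows "length p \<le> tau V E"
proof -
  have "length q \<le> card V" if "is_path V E q" for q
  proof -
    have "length q = card (set q)" using that unfolding is_path_def by (simp add: distinct_card)
    also have "\<dots> \<le> card V" using that \<open>finite V\<close> unfolding is_path_def by (simp add: card_mono)
    finally show ?thesis .
  qed
  then have "finite (insert 0 {length q | q. is_path V E q})"
    by (auto intro: finite_subset[of _ "{0..card V}"])
  with p show ?thesis unfolding tau_def by (intro Max_ge) auto
qed

lemma is_cycle_adj_Suc_mod: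
  assumes c: "is_cycle V E c" and i: "i < length c"
  shows "E (c ! i) (c ! (Suc i mod length c))"
proof (cases "Suc i < length c")
  case True
  with c show ?thesis unfolding is_cycle_def by simp
next
  case False
  with i have "Suc i = length c" by simp
  then have "i = length c - 1" "Suc i mod length c = 0" by simp_all
  moreover have "c \<noteq> []" using i by auto
  ultimately show ?thesis
    using c unfolding is_cycle_def by (simp add: last_conv_nth hd_conv_nth)
qed

lemma is_cycle_two_neighbours:
  assumes sym: "\<And>u v. E u v \<Longrightarrow> E v u" and c: "is_cycle V E c" and "x \<in> set c"
  obtains y z where "y \<in> set c" "z \<in> set c" "y \<noteq> z" "E x y" "E x z"
proof -
  let ?n = "length c"
  obtain i where i: "i < ?n" "c ! i = x" using \<open>x \<in> set c\<close> by (auto simp: in_set_conv_nth)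
  have n: "?n \<ge> 3" and "distinct c" using c unfolding is_cycle_def by auto
  define j where "j = (if i = 0 then ?n - 1 else i - 1)"
  have j: "j < ?n" "Suc j mod ?n = i" using i n unfolding j_def by auto
  have "0 < ?n" using i(1) by linarith
  then have "Suc i mod ?n < ?n" by (rule mod_less_divisor)
  moreover have "Suc i mod ?n \<noteq> j"
  proof (cases "Suc i < ?n")
    case True
    then show ?thesis using n unfolding j_def by auto
  next
    case False
    with i have "Suc i = ?n" by simp
    then show ?thesis using n unfolding j_def by auto
  qed
  ultimately have "c ! (Suc i mod ?n) \<noteq> c ! j"
    using j(1) \<open>distinct c\<close> by (simp add: nth_eq_iff_index_eq)
  moreover have "E x (c ! (Suc i mod ?n))"
    using is_cycle_adj_Suc_mod[OF c i(1)] i(2) by simp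
  moreover have "E x (c ! j)"
    using sym[OF is_cycle_adj_Suc_mod[OF c j(1)]] j(2) i(2) by simp
  ultimately show thesis
    using that \<open>Suc i mod ?n < ?n\<close> j(1) by (meson nth_mem)
qed

lemma card_colours_cycle_gt_2:
  assumes sym: "\<And>u v. E u v \<Longrightarrow> E v u"
    and proper: "proper_on E V col" and lower_distinct: "lower_neighbours_distinct E V col"
    and c: "is_cycle V E c"
  shows "card (col ` set c) > 2"
proof -
  have "set c \<subseteq> V" and "set c \<noteq> {}" using c unfolding is_cycle_def by auto
  then have "Max (col ` set c) \<in> col ` set c" by simp
  then obtain x where x: "x \<in> set c" "col x = Max (col ` set c)" by auto
  obtain y z where yz: "y \<in> set c" "z \<in> set c" "y \<noteq> z" "E x y" "E x z"
    using is_cycle_two_neighbours[OF sym c x(1)] .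
  have V: "x \<in> V" "y \<in> V" "z \<in> V" using x(1) yz(1,2) \<open>set c \<subseteq> V\<close> by blast+
  have "col y \<le> col x" "col z \<le> col x" using x(2) yz(1,2) by simp_all
  moreover have "col x \<noteq> col y" "col x \<noteq> col z"
    using proper V yz(4,5) unfolding proper_on_def by blast+
  ultimately have lower: "col y < col x" "col z < col x" by simp_all
  have "col y \<noteq> col z"
    using lower_distinct V yz(3-5) lower unfolding lower_neighbours_distinct_def by blast
  with lower have "card {col x, col y, col z} = 3" by simp
  moreover have "card {col x, col y, col z} \<le> card (col ` set c)"
    using x(1) yz(1,2) by (intro card_mono) auto
  ultimately show ?thesis by simp
qed

theorem corollary3p1:
  fixes V :: "'a set" and E :: "'a \<Rightarrow> 'a \<Rightarrow> bool"
  assumes "finite_simple_graph V E"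
  shows "acyclic_chromatic_number V E \<le> tau V E"
proof -
  have fin: "finite V" and sym: "\<And>u v. E u v \<Longrightarrow> E v u"
    and edges: "\<And>u v. E u v \<Longrightarrow> u \<in> V \<and> v \<in> V"
    using assms unfolding finite_simple_graph_def by blast+
  have "reachable_from E V V" unfolding reachable_from_def by blast
  then obtain col where col: "depth_colouring V E V V col"
    using depth_colouring_exists[OF assms fin subset_refl] by blast
  have "col ` V \<subseteq> {0..<tau V E}"
  proof
    fix k assume "k \<in> col ` V"
    with col obtain p where "is_path V E p" "k < length p"
      unfolding depth_colouring_def by blast
    with length_le_tau[OF fin] show "k \<in> {0..<tau V E}" by fastforce
  qed
  moreover have "proper_colouring V E col"
    using col edges unfolding depth_colouring_def proper_on_def proper_colouring_def by blast
  moreover have "card (col ` set c) > 2" if "is_cycle V E c" for c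
    using card_colours_cycle_gt_2[of E, OF sym _ _ that] col unfolding depth_colouring_def by blast
  ultimately have "acyclic_colouring V E (tau V E) col" unfolding acyclic_colouring_def by blast
  then show ?thesis unfolding acyclic_chromatic_number_def by (intro Least_le) blast
qed

end
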